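(* Let $0 < \varepsilon \leq 1/2$ and $d \geq 1$. Then for every positive integer $N \leq 2^{(1-H(\varepsilon))d}$ there exists an $\varepsilon$-sparse set $S \subseteq I_3^d$ with $|S| = N$.
   Context: $H(x) = -x\log_2 x - (1-x)\log_2(1-x)$ is the binary entropy function. $I_3^d = \{1,2,3\}^d$. For $\alpha,\beta \in I_3^d$, $\rho(\alpha,\beta)$ is the Hamming distance (number of coordinates where they differ). For $\alpha \in I_3^d$ let $T_\alpha = \{\beta \in I_3^d : \rho(\alpha,\beta) = d\}$. For $0<\varepsilon<1$, a set $S \subseteq I_3^d$ is $\varepsilon$-sparse if (1) $\rho(\alpha,\beta) \geq \varepsilon d$ for all distinct $\alpha,\beta \in S$, and (2) for every $\alpha \in S$ there is $\gamma_\alpha \in I_3^d$ with $T_{\gamma_\alpha} \cap S = \{\alpha\}$. *)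

theory Defs
  imports "HOL-Analysis.Analysis" "HOL-Library.FuncSet"
begin

definition binent :: "real \<Rightarrow> real" where
  "binent x = - x * log 2 x - (1 - x) * log 2 (1 - x)"

definition I3 :: "nat \<Rightarrow> (nat \<Rightarrow> nat) set" where
  "I3 d = {0..<d} \<rightarrow>\<^sub>E {1,2,3}"

definition hamming :: "nat \<Rightarrow> (nat \<Rightarrow> nat) \<Rightarrow> (nat \<Rightarrow> nat) \<Rightarrow> nat" where
  "hamming d a b = card {i \<in> {0..<d}. a i \<noteq> b i}"

definition Tset :: "nat \<Rightarrow> (nat \<Rightarrow> nat) \<Rightarrow> (nat \<Rightarrow> nat) set" where
  "Tset d a = {b \<in> I3 d. hamming d a b = d}"

definition eps_sparse :: "real \<Rightarrow> nat \<Rightarrow> (nat \<Rightarrow> nat) set \<Rightarrow> bool" where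
  "eps_sparse \<epsilon> d S \<longleftrightarrow> S \<subseteq> I3 d \<and>
     (\<forall>a\<in>S. \<forall>b\<in>S. a \<noteq> b \<longrightarrow> real (hamming d a b) \<ge> \<epsilon> * real d) \<and>
     (\<forall>a\<in>S. \<exists>g\<in>I3 d. Tset d g \<inter> S = {a})"

end

theory Submission
  imports Defs
begin

text \<open>
  A Gilbert--Varshamov argument inside the binary subcube \<open>{1,2}^d\<close>. Greedily adding
  words at distance at least \<open>\<epsilon>d\<close> from all words chosen so far succeeds as long as
  the Hamming balls of radius \<open>\<epsilon>d\<close> around them do not cover all \<open>2^d\<close> words; a
  ball has at most \<open>2^{H(\<epsilon>)d}\<close> points, so \<open>2^{(1-H(\<epsilon>))d}\<close> words can be chosen.
  A binary word \<open>a\<close> is then the only binary word differing everywhere from its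
  complement \<open>3 - a\<close>, which gives the separating words.
\<close>

lemma entropy_weight_ge:
  fixes e :: real and n k :: nat
  assumes e: "0 < e" "e \<le> 1/2" and k: "real k \<le> e * real n"
  shows "2 powr (- binent e * real n) \<le> e ^ k * (1 - e) ^ (n - k)"
proof -
  have "k \<le> n"
    using k e mult_right_mono[of e 1 "real n"] by linarith
  have "ln e \<le> ln (1 - e)"
    using e by simp
  have "ln (2 powr (- binent e * real n)) = real n * ln (1 - e) + (e * real n) * (ln e - ln (1 - e))"
    unfolding binent_def log_def by (simp add: ln_powr field_simps)
  also have "\<dots> \<le> real n * ln (1 - e) + real k * (ln e - ln (1 - e))"
    using k \<open>ln e \<le> ln (1 - e)\<close> by (intro add_left_mono mult_right_mono_neg) auto
  also have "\<dots> = ln (e ^ k * (1 - e) ^ (n - k))"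
    using e \<open>k \<le> n\<close> by (simp add: ln_mult ln_realpow of_nat_diff algebra_simps)
  finally show ?thesis
    using e by (subst (asm) ln_le_cancel_iff) auto
qed

text \<open>Each small set has weight \<open>e^|A| (1-e)^{n-|A|} \<ge> 2^{-H(e)n}\<close>, and all weights sum to 1.\<close>
lemma card_small_subsets_le_entropy:
  fixes e :: real and I :: "'a set"
  assumes "finite I" and e: "0 < e" "e \<le> 1/2"
  shows "real (card {A. A \<subseteq> I \<and> real (card A) < e * real (card I)})
           \<le> 2 powr (binent e * real (card I))"
proof -
  let ?n = "card I"
  let ?P = "{A. A \<subseteq> I \<and> real (card A) < e * real ?n}"
  let ?w = "\<lambda>A. e ^ card A * (1 - e) ^ (?n - card A)"
  have "(\<Sum>A\<in>Pow I. ?w A) = (\<Sum>A\<in>Pow I. (\<Prod>x\<in>A. e) * (\<Prod>x\<in>I - A. 1 - e))"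
    using \<open>finite I\<close> by (intro sum.cong refl) (auto simp: card_Diff_subset finite_subset)
  also have "\<dots> = (\<Prod>x\<in>I. e + (1 - e))"
    using \<open>finite I\<close> by (rule prod_add[symmetric])
  finally have total: "(\<Sum>A\<in>Pow I. ?w A) = 1"
    by simp
  have "real (card ?P) * 2 powr (- binent e * real ?n) = (\<Sum>A\<in>?P. 2 powr (- binent e * real ?n))"
    by simp
  also have "\<dots> \<le> (\<Sum>A\<in>?P. ?w A)"
    by (intro sum_mono entropy_weight_ge e) auto
  also have "\<dots> \<le> (\<Sum>A\<in>Pow I. ?w A)"
    using \<open>finite I\<close> e by (intro sum_mono2) auto
  finally have "real (card ?P) / 2 powr (binent e * real ?n) \<le> 1"
    using total by (simp add: powr_minus divide_inverse)
  then show ?thesis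
    by (simp add: divide_le_eq_1)
qed

lemma greedy_packing:
  fixes X :: "'a set" and R :: "'a \<Rightarrow> 'a \<Rightarrow> bool"
  assumes "finite X"
    and refl: "\<And>x. x \<in> X \<Longrightarrow> R x x"
    and sym: "\<And>x y. R x y \<Longrightarrow> R y x"
    and ball: "\<And>x. x \<in> X \<Longrightarrow> card {y \<in> X. R x y} \<le> V"
    and "0 < V" and "n * V \<le> card X"
  shows "\<exists>C \<subseteq> X. card C = n \<and> (\<forall>a\<in>C. \<forall>b\<in>C. a \<noteq> b \<longrightarrow> \<not> R a b)"
  using \<open>n * V \<le> card X\<close>
proof (induction n)
  case 0
  show ?case
    by (intro exI[of _ "{}"]) simp
next
  case (Suc n)
  then obtain C where C: "C \<subseteq> X" "card C = n" "\<forall>a\<in>C. \<forall>b\<in>C. a \<noteq> b \<longrightarrow> \<not> R a b"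
    by auto
  have "finite C"
    using C(1) \<open>finite X\<close> finite_subset by blast
  let ?covered = "\<Union>c\<in>C. {y \<in> X. R c y}"
  have "card ?covered \<le> (\<Sum>c\<in>C. card {y \<in> X. R c y})"
    using \<open>finite C\<close> by (rule card_UN_le)
  also have "\<dots> \<le> n * V"
    using sum_mono[of C "\<lambda>c. card {y \<in> X. R c y}" "\<lambda>_. V"] ball C(1,2) by auto
  also have "\<dots> < card X"
    using Suc.prems \<open>0 < V\<close> by simp
  finally have "card ?covered < card X" .
  moreover have "finite ?covered"
    using \<open>finite C\<close> \<open>finite X\<close> by auto
  ultimately have "\<not> X \<subseteq> ?covered"
    using card_mono by fastforce
  then obtain x where x: "x \<in> X" "x \<notin> ?covered"
    by blast
  then have "x \<notin> C"
    using refl by blast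
  show ?case
  proof (intro exI[of _ "insert x C"] conjI)
    show "insert x C \<subseteq> X" "card (insert x C) = Suc n"
      using x C \<open>finite C\<close> \<open>x \<notin> C\<close> by auto
    show "\<forall>a\<in>insert x C. \<forall>b\<in>insert x C. a \<noteq> b \<longrightarrow> \<not> R a b"
      using C(3) x sym by blast
  qed
qed

definition cube12 :: "nat \<Rightarrow> (nat \<Rightarrow> nat) set" where
  "cube12 d = {0..<d} \<rightarrow>\<^sub>E {1,2}"

lemma cube12_subset_I3: "cube12 d \<subseteq> I3 d"
  unfolding cube12_def I3_def by (auto simp: PiE_def Pi_def)

lemma finite_cube12: "finite (cube12 d)"
  unfolding cube12_def by (auto intro: finite_PiE)

lemma card_cube12: "card (cube12 d) = 2 ^ d"
  unfolding cube12_def by (simp add: card_PiE numeral_2_eq_2)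

lemma hamming_sym: "hamming d a b = hamming d b a"
  unfolding hamming_def by (metis (no_types, lifting))

lemma hamming_self: "hamming d a a = 0"
  unfolding hamming_def by simp

lemma hamming_eq_dim_iff: "hamming d a b = d \<longleftrightarrow> (\<forall>i<d. a i \<noteq> b i)"
proof
  assume "hamming d a b = d"
  then have "{i \<in> {0..<d}. a i \<noteq> b i} = {0..<d}"
    unfolding hamming_def by (intro card_subset_eq) auto
  then show "\<forall>i<d. a i \<noteq> b i"
    by (metis (mono_tags, lifting) atLeastLessThan_iff le0 mem_Collect_eq)
next
  assume "\<forall>i<d. a i \<noteq> b i"
  then have "{i \<in> {0..<d}. a i \<noteq> b i} = {0..<d}"
    by auto
  then show "hamming d a b = d"
    unfolding hamming_def by simp
qed

lemma cube12_eqI: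
  assumes "a \<in> cube12 d" "b \<in> cube12 d" "\<And>i. i < d \<Longrightarrow> a i = b i"
  shows "a = b"
  using assms unfolding cube12_def by (metis PiE_ext atLeastLessThan_iff)

text \<open>In \<open>{1,2}^d\<close> a word is determined by the set of coordinates where it disagrees with \<open>c\<close>.\<close>
lemma card_hamming_ball_cube12_le:
  assumes "c \<in> cube12 d"
  shows "card {b \<in> cube12 d. real (hamming d c b) < r}
           \<le> card {A. A \<subseteq> {0..<d} \<and> real (card A) < r}"
proof (rule card_inj_on_le)
  let ?diff = "\<lambda>b. {i \<in> {0..<d}. c i \<noteq> b i}"
  show "inj_on ?diff {b \<in> cube12 d. real (hamming d c b) < r}"
  proof (rule inj_onI)
    fix x y
    assume x: "x \<in> {b \<in> cube12 d. real (hamming d c b) < r}"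
      and y: "y \<in> {b \<in> cube12 d. real (hamming d c b) < r}" and "?diff x = ?diff y"
    show "x = y"
    proof (rule cube12_eqI)
      show "x \<in> cube12 d" "y \<in> cube12 d"
        using x y by simp_all
      fix i
      assume "i < d"
      have "i \<in> ?diff x \<longleftrightarrow> i \<in> ?diff y"
        by (simp only: \<open>?diff x = ?diff y\<close>)
      then have "c i \<noteq> x i \<longleftrightarrow> c i \<noteq> y i"
        using \<open>i < d\<close> by simp
      moreover have "x i \<in> {1,2}" "y i \<in> {1,2}" "c i \<in> {1,2}"
        using \<open>x \<in> cube12 d\<close> \<open>y \<in> cube12 d\<close> assms \<open>i < d\<close> unfolding cube12_def by auto
      ultimately show "x i = y i"
        by auto
    qed
  qed
  show "?diff ` {b \<in> cube12 d. real (hamming d c b) < r} \<subseteq> {A. A \<subseteq> {0..<d} \<and> real (card A) < r}"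
    unfolding hamming_def by auto
  show "finite {A. A \<subseteq> {0..<d} \<and> real (card A) < r}"
    by (rule finite_subset[of _ "Pow {0..<d}"]) auto
qed

lemma cube12_separating_word:
  assumes "S \<subseteq> cube12 d" and "a \<in> S"
  shows "\<exists>g\<in>I3 d. Tset d g \<inter> S = {a}"
proof -
  define g where "g = restrict (\<lambda>i. 3 - a i) {0..<d}"
  have "a \<in> cube12 d"
    using assms by blast
  then have a: "a i \<in> {1,2}" if "i < d" for i
    using that unfolding cube12_def by auto
  have "g \<in> I3 d"
    using a unfolding g_def I3_def by fastforce
  have "b \<in> Tset d g \<longleftrightarrow> b = a" if "b \<in> cube12 d" for b
  proof -
    have "b i \<in> {1,2}" if "i < d" for i
      using \<open>b \<in> cube12 d\<close> that unfolding cube12_def by auto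
    then have "(\<forall>i<d. g i \<noteq> b i) \<longleftrightarrow> (\<forall>i<d. a i = b i)"
      using a by (force simp: g_def)
    also have "\<dots> \<longleftrightarrow> b = a"
      using that assms cube12_eqI[of a d b] by auto
    finally show ?thesis
      unfolding Tset_def hamming_eq_dim_iff using that cube12_subset_I3 by blast
  qed
  then have "Tset d g \<inter> S = {a}"
    using assms unfolding Tset_def by blast
  with \<open>g \<in> I3 d\<close> show ?thesis
    by blast
qed

theorem proposition6:
  fixes \<epsilon> :: real and d N :: nat
  assumes "0 < \<epsilon>" and "\<epsilon> \<le> 1/2" and "d \<ge> 1"
    and "N \<ge> 1" and "real N \<le> 2 powr ((1 - binent \<epsilon>) * real d)"
  shows "\<exists>S. S \<subseteq> I3 d \<and> eps_sparse \<epsilon> d S \<and> card S = N"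
proof -
  let ?close = "\<lambda>a b. real (hamming d a b) < \<epsilon> * real d"
  let ?V = "card {A. A \<subseteq> {0..<d} \<and> real (card A) < \<epsilon> * real d}"
  have "0 < \<epsilon> * real d"
    using assms by simp
  then have "{} \<in> {A. A \<subseteq> {0..<d} \<and> real (card A) < \<epsilon> * real d}"
    by simp
  then have "0 < ?V"
    by (subst card_gt_0_iff) (auto intro: finite_subset[of _ "Pow {0..<d}"])
  have "real N * real ?V \<le> 2 powr ((1 - binent \<epsilon>) * real d) * 2 powr (binent \<epsilon> * real d)"
    using assms card_small_subsets_le_entropy[of "{0..<d}" \<epsilon>] by (intro mult_mono) auto
  also have "\<dots> = real (card (cube12 d))"
    by (simp add: card_cube12 algebra_simps powr_realpow flip: powr_add)
  finally have "N * ?V \<le> card (cube12 d)"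
    by (simp flip: of_nat_mult)
  then obtain S where S: "S \<subseteq> cube12 d" "card S = N" "\<forall>a\<in>S. \<forall>b\<in>S. a \<noteq> b \<longrightarrow> \<not> ?close a b"
    using greedy_packing[of "cube12 d" ?close ?V N] finite_cube12 hamming_self hamming_sym
      card_hamming_ball_cube12_le \<open>0 < \<epsilon> * real d\<close> \<open>0 < ?V\<close> by auto
  have "S \<subseteq> I3 d"
    using S(1) cube12_subset_I3 by blast
  moreover have "eps_sparse \<epsilon> d S"
    unfolding eps_sparse_def using \<open>S \<subseteq> I3 d\<close> S(3) cube12_separating_word[OF S(1)]
    by (auto simp: not_less)
  ultimately show ?thesis
    using S(2) by blast
qed

end
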